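(* Let $T>0$, $p>1$, $E_3\ge0$, $\gamma\in(0,pT)$, and $\epsilon\in(0,1)$. Let $\varphi,\varphi_\epsilon\in L^2(\mathbb{R})$ with $\|\varphi-\varphi_\epsilon\|\le\epsilon$, and let $u$ be the exact solution of the backward heat problem with final value $\varphi$, satisfying $$\int_{-\infty}^{\infty}e^{2\gamma\xi^2}|\hat u(\xi,0)|^2\,d\xi\le E_3^2.$$ Choose $\beta=\epsilon$, let $v_\epsilon=R_\beta\varphi_\epsilon$, and set $h=\min\{\gamma,(p-1)T\}$. Then for every $t\in[0,T]$, $$\|u(\cdot,t)-v_\epsilon(\cdot,t)\|\le \epsilon^{\frac{t+h}{pT}}(E_3+1).$$ In particular, $\|u(\cdot,0)-v_\epsilon(\cdot,0)\|\le \epsilon^{\frac{h}{pT}}(E_3+1)$.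
   Context: $\|\cdot\|$ denotes the norm of $L^2(\mathbb{R})$. The Fourier transform is $\hat\psi(\xi)=\frac{1}{\sqrt{2\pi}}\int_{-\infty}^{\infty}\psi(x)e^{-i\xi x}\,dx$ (extended to $L^2(\mathbb{R})$ as a unitary map). Exact solution: for $\varphi\in L^2(\mathbb{R})$, the exact solution $u$ of $u_t-u_{xx}=0$ on $\mathbb{R}\times(0,T)$, $u(\cdot,T)=\varphi$, is given by $\hat u(\xi,t)=e^{(T-t)\xi^2}\hat\varphi(\xi)$ for $t\in[0,T]$. Regularized solution: for $\beta>0$ and $\psi\in L^2(\mathbb{R})$, $R_\beta\psi$ is the function whose Fourier transform in $x$ is $\widehat{(R_\beta\psi)}(\xi,t)=\frac{e^{-t\xi^2}}{\beta e^{(p-1)T\xi^2}+e^{-T\xi^2}}\hat\psi(\xi)=\frac{e^{(T-t)\xi^2}}{1+\beta e^{pT\xi^2}}\hat\psi(\xi)$, $t\in[0,T]$. *)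

theory Defs
  imports "HOL-Analysis.Analysis"
begin

definition sq_int :: "(real \<Rightarrow> complex) \<Rightarrow> bool" where
  "sq_int f \<longleftrightarrow> f \<in> borel_measurable lborel \<and> integrable lborel (\<lambda>x. (cmod (f x))\<^sup>2)"

definition L2norm :: "(real \<Rightarrow> complex) \<Rightarrow> real" where
  "L2norm f = sqrt (\<integral>x. (cmod (f x))\<^sup>2 \<partial>lborel)"

text \<open>The defining properties of the L2 Fourier transform: it agrees with the integral
  (1/sqrt(2 pi)) int psi(x) e^(-i xi x) dx on L1 \<inter> L2, and is a unitary (linear, norm-preserving,
  onto) map of L2(R), identified up to a.e. equality. These properties determine it uniquely
  up to a.e. equality.\<close>
definition is_L2_fourier :: "((real \<Rightarrow> complex) \<Rightarrow> (real \<Rightarrow> complex)) \<Rightarrow> bool" where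
  "is_L2_fourier F \<longleftrightarrow>
     (\<forall>\<psi>. sq_int \<psi> \<and> integrable lborel \<psi> \<longrightarrow>
        (AE \<xi> in lborel. F \<psi> \<xi> =
            complex_of_real (1 / sqrt (2 * pi)) * (\<integral>x. \<psi> x * cis (- (\<xi> * x)) \<partial>lborel))) \<and>
     (\<forall>\<psi>. sq_int \<psi> \<longrightarrow> sq_int (F \<psi>) \<and> L2norm (F \<psi>) = L2norm \<psi>) \<and>
     (\<forall>\<psi> \<eta>. sq_int \<psi> \<and> sq_int \<eta> \<longrightarrow>
        (AE \<xi> in lborel. F (\<lambda>x. \<psi> x + \<eta> x) \<xi> = F \<psi> \<xi> + F \<eta> \<xi>)) \<and>
     (\<forall>\<psi> c. sq_int \<psi> \<longrightarrow> (AE \<xi> in lborel. F (\<lambda>x. c * \<psi> x) \<xi> = c * F \<psi> \<xi>)) \<and>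
     (\<forall>\<psi>. sq_int \<psi> \<and> (AE x in lborel. \<psi> x = 0) \<longrightarrow> (AE \<xi> in lborel. F \<psi> \<xi> = 0)) \<and>
     (\<forall>g. sq_int g \<longrightarrow> (\<exists>\<psi>. sq_int \<psi> \<and> (AE \<xi> in lborel. F \<psi> \<xi> = g \<xi>)))"

end

theory Submission
  imports Defs
begin

text \<open>
  On the Fourier side the
  error u(t) - v(t) at frequency \<xi> (with x = \<xi>^2) splits into two terms:
  exp((T-t)x) F\<phi> - r F\<phi>\<epsilon> = A \<cdot> F(u(0)) + r \<cdot> F(\<phi> - \<phi>\<epsilon>), where
  A = \<epsilon> e^{pTx}/(1 + \<epsilon> e^{pTx}) \<cdot> e^{-tx} and r = e^{(T-t)x}/(1 + \<epsilon> e^{pTx}).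
  Both multipliers are controlled by interpolating the logistic function w/(1+w) between
  min 1 w and w powr \<theta>: A \<le> \<epsilon>^c e^{\<gamma>x} and r \<le> \<epsilon>^c/\<epsilon> with c = (t+h)/(pT), as long as
  h \<le> \<gamma> and h \<le> (p-1)T.  Hence |F(u(t)-v(t))| \<le> \<epsilon>^c (g1 + g2) pointwise, where
  g1 = e^{\<gamma>\<xi>^2}|F(u(0))| has L2 norm \<le> E3 by the a priori bound and g2 = |F(\<phi>-\<phi>\<epsilon>)|/\<epsilon>
  has L2 norm \<le> 1 by Plancherel.  A Minkowski inequality and Plancherel again give the claim.
\<close>

text \<open>The logistic function w/(1+w) lies below min 1 w, hence below every
  interpolant w powr \<theta> with 0 \<le> \<theta> \<le> 1.\<close>
lemma logistic_le_powr:
  fixes w \<theta> :: real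
  assumes w: "w > 0" and \<theta>: "0 \<le> \<theta>" "\<theta> \<le> 1"
  shows "w / (1 + w) \<le> w powr \<theta>"
proof (cases "w \<le> 1")
  case True
  have "w / (1 + w) \<le> w" using w by (simp add: divide_le_eq)
  also have "w = w powr 1" using w by simp
  also have "\<dots> \<le> w powr \<theta>" using w True \<theta> by (intro powr_mono') auto
  finally show ?thesis .
next
  case False
  have "w / (1 + w) \<le> 1" using w by simp
  also have "1 \<le> w powr \<theta>" using False \<theta> by (intro ge_one_powr_ge_zero) auto
  finally show ?thesis .
qed

text \<open>The same bound applied to 1/w: the complementary logistic function 1/(1+w)
  decays at least like w powr (-\<theta>).\<close>
lemma inverse_logistic_le_powr:
  fixes w \<theta> :: real
  assumes w: "w > 0" and \<theta>: "0 \<le> \<theta>" "\<theta> \<le> 1"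
  shows "1 / (1 + w) \<le> w powr (- \<theta>)"
proof -
  have "1 / (1 + w) = (1 / w) / (1 + 1 / w)" using w by (simp add: field_simps)
  also have "\<dots> \<le> (1 / w) powr \<theta>" using w \<theta> by (intro logistic_le_powr) auto
  also have "\<dots> = w powr (- \<theta>)" using w by (simp add: powr_minus_divide powr_divide)
  finally show ?thesis .
qed

text \<open>Bound on the multiplier A that transmits the exact initial value into the error:
  interpolation with \<theta> = (t+h)/P leaves the factor exp(h x), which the a priori weight
  exp(\<gamma> x) absorbs as long as h \<le> \<gamma>.\<close>
lemma damping_multiplier_le:
  fixes \<epsilon> P t h \<gamma> x :: real
  assumes \<epsilon>: "\<epsilon> > 0" and P: "P > 0" and th: "0 \<le> t + h" "t + h \<le> P"
    and h\<gamma>: "h \<le> \<gamma>" and x: "x \<ge> 0"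
  shows "\<epsilon> * exp (P * x) / (1 + \<epsilon> * exp (P * x)) * exp (- (t * x))
      \<le> \<epsilon> powr ((t + h) / P) * exp (\<gamma> * x)"
proof -
  define c where "c = (t + h) / P"
  have c: "0 \<le> c" "c \<le> 1" "c * P = t + h" using P th by (auto simp: c_def field_simps)
  have "\<epsilon> * exp (P * x) / (1 + \<epsilon> * exp (P * x)) \<le> (\<epsilon> * exp (P * x)) powr c"
    using \<epsilon> c by (intro logistic_le_powr) auto
  also have "\<dots> = \<epsilon> powr c * exp (c * P * x)"
    using \<epsilon> by (simp add: powr_mult exp_powr_real mult.commute mult.left_commute)
  finally have "\<epsilon> * exp (P * x) / (1 + \<epsilon> * exp (P * x)) * exp (- (t * x))
      \<le> \<epsilon> powr c * exp (c * P * x) * exp (- (t * x))" by (rule mult_right_mono) auto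
  also have "\<dots> = \<epsilon> powr c * exp (h * x)"
    using c(3) by (simp add: mult.assoc exp_add[symmetric] algebra_simps)
  also have "\<dots> \<le> \<epsilon> powr c * exp (\<gamma> * x)"
    using h\<gamma> x by (intro mult_left_mono) (auto intro: mult_right_mono)
  finally show ?thesis unfolding c_def .
qed

text \<open>Bound on the regularizing multiplier r that transmits the data noise: interpolation
  with \<theta> = 1 - (t+h)/P cancels the growth exp((T-t)x) as long as h \<le> P - T.\<close>
lemma regularization_multiplier_le:
  fixes \<epsilon> P T t h x :: real
  assumes \<epsilon>: "\<epsilon> > 0" and P: "P > 0" and th: "0 \<le> t + h" "t + h \<le> P"
    and hT: "h \<le> P - T" and x: "x \<ge> 0"
  shows "exp ((T - t) * x) / (1 + \<epsilon> * exp (P * x)) \<le> \<epsilon> powr ((t + h) / P) / \<epsilon>"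
proof -
  define c where "c = (t + h) / P"
  have c: "0 \<le> c" "c \<le> 1" "(1 - c) * P = P - t - h" using P th by (auto simp: c_def field_simps)
  have exponent: "(T - t) * x - (1 - c) * P * x = (h - (P - T)) * x"
    unfolding c(3) by (simp add: algebra_simps)
  have "1 / (1 + \<epsilon> * exp (P * x)) \<le> (\<epsilon> * exp (P * x)) powr (- (1 - c))"
    using \<epsilon> c by (intro inverse_logistic_le_powr) auto
  also have "\<dots> = \<epsilon> powr (c - 1) * exp (- ((1 - c) * P * x))"
    using \<epsilon> by (simp add: powr_mult exp_powr_real algebra_simps)
  finally have "exp ((T - t) * x) / (1 + \<epsilon> * exp (P * x))
      \<le> exp ((T - t) * x) * (\<epsilon> powr (c - 1) * exp (- ((1 - c) * P * x)))"
    by (simp add: divide_inverse mult_left_mono flip: inverse_eq_divide)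
  also have "\<dots> = \<epsilon> powr (c - 1) * exp ((h - (P - T)) * x)"
    unfolding exponent[symmetric] by (simp add: mult.left_commute flip: exp_add)
  also have "\<dots> \<le> \<epsilon> powr (c - 1)"
  proof -
    have "exp ((h - (P - T)) * x) \<le> 1" using hT x by (simp add: mult_nonpos_nonneg)
    thus ?thesis by (simp add: mult_left_le)
  qed
  also have "\<dots> = \<epsilon> powr c / \<epsilon>" using \<epsilon> by (simp add: powr_diff)
  finally show ?thesis unfolding c_def .
qed
text \<open>Here a and b stand for the Fourier
  transforms of the exact and of the noisy final data at a frequency \<xi> with x = \<xi>^2, so
  exp(T x) a is the transform of the exact initial value.\<close>
lemma frequency_error_le:
  fixes a b :: complex and \<epsilon> P T t h \<gamma> x :: real
  assumes \<epsilon>: "\<epsilon> > 0" and P: "P > 0" and th: "0 \<le> t + h" "t + h \<le> P"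
    and h\<gamma>: "h \<le> \<gamma>" and hT: "h \<le> P - T" and x: "x \<ge> 0"
  shows "cmod (exp ((T - t) * x) * a - (exp ((T - t) * x) / (1 + \<epsilon> * exp (P * x))) * b)
      \<le> \<epsilon> powr ((t + h) / P) * (exp (\<gamma> * x) * cmod (exp (T * x) * a) + cmod (a - b) / \<epsilon>)"
proof -
  define s where "s = 1 + \<epsilon> * exp (P * x)"
  define A where "A = \<epsilon> * exp (P * x) / s * exp (- (t * x))"
  define r where "r = exp ((T - t) * x) / s"
  have s: "s > 0" unfolding s_def using \<epsilon> by (simp add: add_pos_pos)
  have A: "A \<ge> 0" and r: "r \<ge> 0" unfolding A_def r_def using \<epsilon> s by auto
  have "A * exp (T * x) + r = (\<epsilon> * exp (P * x) + 1) / s * exp ((T - t) * x)"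
    unfolding A_def r_def using s by (simp add: field_simps flip: exp_add)
  also have "\<dots> = exp ((T - t) * x)" using s by (simp add: s_def add.commute)
  finally have multipliers_sum: "A * exp (T * x) + r = exp ((T - t) * x)" .
  have "exp ((T - t) * x) * a - r * b = A * (exp (T * x) * a) + r * (a - b)"
    unfolding multipliers_sum[symmetric] by (simp add: algebra_simps)
  hence "cmod (exp ((T - t) * x) * a - r * b) \<le> A * cmod (exp (T * x) * a) + r * cmod (a - b)"
    using A r norm_triangle_ineq[of "A * (exp (T * x) * a)" "r * (a - b)"]
    by (simp add: norm_mult)
  also have "\<dots> \<le> (\<epsilon> powr ((t + h) / P) * exp (\<gamma> * x)) * cmod (exp (T * x) * a)
      + (\<epsilon> powr ((t + h) / P) / \<epsilon>) * cmod (a - b)"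
    unfolding A_def r_def s_def
    by (intro add_mono mult_right_mono damping_multiplier_le regularization_multiplier_le)
       (use assms in auto)
  finally show ?thesis unfolding r_def s_def by (simp add: algebra_simps)
qed

lemma sq_int_diff:
  assumes "sq_int \<psi>" "sq_int \<eta>"
  shows "sq_int (\<lambda>x. \<psi> x - \<eta> x)"
proof -
  have [measurable]: "\<psi> \<in> borel_measurable lborel" "\<eta> \<in> borel_measurable lborel"
    using assms unfolding sq_int_def by auto
  have majorant: "integrable lborel (\<lambda>x. 2 * (cmod (\<psi> x))\<^sup>2 + 2 * (cmod (\<eta> x))\<^sup>2)"
    using assms unfolding sq_int_def by auto
  have "(cmod (\<psi> x - \<eta> x))\<^sup>2 \<le> 2 * (cmod (\<psi> x))\<^sup>2 + 2 * (cmod (\<eta> x))\<^sup>2" for x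
  proof -
    have "(cmod (\<psi> x - \<eta> x))\<^sup>2 \<le> (cmod (\<psi> x) + cmod (\<eta> x))\<^sup>2"
      by (intro power_mono norm_triangle_ineq4) auto
    also have "\<dots> \<le> 2 * (cmod (\<psi> x))\<^sup>2 + 2 * (cmod (\<eta> x))\<^sup>2"
      using sum_squares_ge_zero[of 0 "cmod (\<psi> x) - cmod (\<eta> x)"]
      by (simp add: power2_eq_square algebra_simps)
    finally show ?thesis .
  qed
  hence "integrable lborel (\<lambda>x. (cmod (\<psi> x - \<eta> x))\<^sup>2)"
    by (intro Bochner_Integration.integrable_bound[OF majorant]) auto
  thus ?thesis unfolding sq_int_def by auto
qed

lemma L2_fourier_diff:
  assumes F: "is_L2_fourier F" and "sq_int \<psi>" "sq_int \<eta>"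
  shows "AE \<xi> in lborel. F (\<lambda>x. \<psi> x - \<eta> x) \<xi> = F \<psi> \<xi> - F \<eta> \<xi>"
proof -
  have neg: "sq_int (\<lambda>x. - 1 * \<eta> x)"
    using assms(3) unfolding sq_int_def by (simp add: norm_minus_cancel)
  have "AE \<xi> in lborel. F (\<lambda>x. \<psi> x + - 1 * \<eta> x) \<xi> = F \<psi> \<xi> + F (\<lambda>x. - 1 * \<eta> x) \<xi>"
    using F assms(2) neg unfolding is_L2_fourier_def by blast
  moreover have "AE \<xi> in lborel. F (\<lambda>x. - 1 * \<eta> x) \<xi> = - 1 * F \<eta> \<xi>"
    using F assms(3) unfolding is_L2_fourier_def by blast
  ultimately show ?thesis by eventually_elim simp
qed

lemma L2_fourier_plancherel:
  assumes F: "is_L2_fourier F" and \<psi>: "sq_int \<psi>"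
  shows "(\<integral>\<^sup>+\<xi>. ennreal ((cmod (F \<psi> \<xi>))\<^sup>2) \<partial>lborel) = ennreal ((L2norm \<psi>)\<^sup>2)"
proof -
  have "sq_int (F \<psi>)" and isometry: "L2norm (F \<psi>) = L2norm \<psi>"
    using F \<psi> unfolding is_L2_fourier_def by blast+
  hence "integrable lborel (\<lambda>\<xi>. (cmod (F \<psi> \<xi>))\<^sup>2)" unfolding sq_int_def by auto
  hence "(\<integral>\<^sup>+\<xi>. ennreal ((cmod (F \<psi> \<xi>))\<^sup>2) \<partial>lborel) = ennreal (\<integral>\<xi>. (cmod (F \<psi> \<xi>))\<^sup>2 \<partial>lborel)"
    by (intro nn_integral_eq_integral) auto
  also have "(\<integral>\<xi>. (cmod (F \<psi> \<xi>))\<^sup>2 \<partial>lborel) = (L2norm (F \<psi>))\<^sup>2"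
    unfolding L2norm_def by (simp add: integral_nonneg_AE)
  finally show ?thesis using isometry by simp
qed

text \<open>For a > 0 it follows from the weighted Young inequality
  (f+g)^2 \<le> (1+b/a) f^2 + (1+a/b) g^2; for a = 0 the function f vanishes almost everywhere.\<close>
lemma nn_integral_square_sum_le:
  fixes f g :: "real \<Rightarrow> real" and a b :: real
  assumes fm: "f \<in> borel_measurable lborel" and gm: "g \<in> borel_measurable lborel"
    and f0: "\<And>x. f x \<ge> 0" and g0: "\<And>x. g x \<ge> 0"
    and fi: "(\<integral>\<^sup>+x. ennreal ((f x)\<^sup>2) \<partial>lborel) \<le> ennreal (a\<^sup>2)"
    and gi: "(\<integral>\<^sup>+x. ennreal ((g x)\<^sup>2) \<partial>lborel) \<le> ennreal (b\<^sup>2)"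
    and a: "a \<ge> 0" and b: "b > 0"
  shows "(\<integral>\<^sup>+x. ennreal ((f x + g x)\<^sup>2) \<partial>lborel) \<le> ennreal ((a+b)\<^sup>2)"
proof (cases "a = 0")
  case True
  have "(\<integral>\<^sup>+x. ennreal ((f x)\<^sup>2) \<partial>lborel) = 0" using fi True by simp
  hence "AE x in lborel. ennreal ((f x)\<^sup>2) = 0"
    by (subst (asm) nn_integral_0_iff_AE) (use fm in auto)
  hence "AE x in lborel. ennreal ((f x + g x)\<^sup>2) = ennreal ((g x)\<^sup>2)"
    by eventually_elim simp
  hence "(\<integral>\<^sup>+x. ennreal ((f x + g x)\<^sup>2) \<partial>lborel) = (\<integral>\<^sup>+x. ennreal ((g x)\<^sup>2) \<partial>lborel)"
    by (rule nn_integral_cong_AE)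
  thus ?thesis using gi True by simp
next
  case False
  hence a': "a > 0" using a by simp
  have weighted_young: "(f x + g x)\<^sup>2 \<le> (1 + b/a) * (f x)\<^sup>2 + (1 + a/b) * (g x)\<^sup>2" for x
  proof -
    have "0 \<le> (b * f x - a * g x)\<^sup>2" by simp
    hence "2 * (a*b) * (f x * g x) \<le> b\<^sup>2 * (f x)\<^sup>2 + a\<^sup>2 * (g x)\<^sup>2"
      by (simp add: power2_eq_square algebra_simps)
    hence "2 * (f x * g x) \<le> (b\<^sup>2 * (f x)\<^sup>2 + a\<^sup>2 * (g x)\<^sup>2) / (a*b)"
      using a' b by (simp add: le_divide_eq algebra_simps)
    also have "\<dots> = b/a * (f x)\<^sup>2 + a/b * (g x)\<^sup>2"
      using a' b by (simp add: field_simps power2_eq_square)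
    finally show ?thesis by (simp add: power2_eq_square algebra_simps)
  qed
  have "(\<integral>\<^sup>+x. ennreal ((f x + g x)\<^sup>2) \<partial>lborel)
     \<le> (\<integral>\<^sup>+x. ennreal (1 + b/a) * ennreal ((f x)\<^sup>2) + ennreal (1 + a/b) * ennreal ((g x)\<^sup>2) \<partial>lborel)"
    using weighted_young a' b by (intro nn_integral_mono) (simp add: ennreal_mult[symmetric] ennreal_plus[symmetric] del: ennreal_plus)
  also have "\<dots> = ennreal (1 + b/a) * (\<integral>\<^sup>+x. ennreal ((f x)\<^sup>2) \<partial>lborel)
        + ennreal (1 + a/b) * (\<integral>\<^sup>+x. ennreal ((g x)\<^sup>2) \<partial>lborel)"
    using fm gm by (simp add: nn_integral_add nn_integral_cmult)
  also have "\<dots> \<le> ennreal (1 + b/a) * ennreal (a\<^sup>2) + ennreal (1 + a/b) * ennreal (b\<^sup>2)"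
    by (intro add_mono mult_left_mono fi gi) auto
  also have "\<dots> = ennreal ((1 + b/a) * a\<^sup>2 + (1 + a/b) * b\<^sup>2)"
    using a' b by (simp add: ennreal_mult[symmetric] ennreal_plus[symmetric] del: ennreal_plus)
  also have "(1 + b/a) * a\<^sup>2 + (1 + a/b) * b\<^sup>2 = (a+b)\<^sup>2"
    using a' b by (simp add: field_simps power2_eq_square)
  finally show ?thesis .
qed

text \<open>An L2 bound for a function whose Fourier transform is dominated by a (scaled) sum
  of two functions with known L2 bounds: Minkowski plus Plancherel.\<close>
lemma L2norm_le_by_fourier_majorant:
  fixes g1 g2 :: "real \<Rightarrow> real" and a b c :: real
  assumes F: "is_L2_fourier F" and \<psi>: "sq_int \<psi>"
    and g_meas [measurable]: "g1 \<in> borel_measurable lborel" "g2 \<in> borel_measurable lborel"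
    and g_nonneg: "\<And>\<xi>. g1 \<xi> \<ge> 0" "\<And>\<xi>. g2 \<xi> \<ge> 0"
    and g1: "(\<integral>\<^sup>+\<xi>. ennreal ((g1 \<xi>)\<^sup>2) \<partial>lborel) \<le> ennreal (a\<^sup>2)"
    and g2: "(\<integral>\<^sup>+\<xi>. ennreal ((g2 \<xi>)\<^sup>2) \<partial>lborel) \<le> ennreal (b\<^sup>2)"
    and a: "a \<ge> 0" and b: "b > 0" and c: "c \<ge> 0"
    and majorant: "AE \<xi> in lborel. cmod (F \<psi> \<xi>) \<le> c * (g1 \<xi> + g2 \<xi>)"
  shows "L2norm \<psi> \<le> c * (a + b)"
proof -
  have "ennreal ((L2norm \<psi>)\<^sup>2) = (\<integral>\<^sup>+\<xi>. ennreal ((cmod (F \<psi> \<xi>))\<^sup>2) \<partial>lborel)"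
    using L2_fourier_plancherel[OF F \<psi>] ..
  also have "\<dots> \<le> (\<integral>\<^sup>+\<xi>. ennreal (c\<^sup>2) * ennreal ((g1 \<xi> + g2 \<xi>)\<^sup>2) \<partial>lborel)"
  proof (rule nn_integral_mono_AE)
    show "AE \<xi> in lborel. ennreal ((cmod (F \<psi> \<xi>))\<^sup>2) \<le> ennreal (c\<^sup>2) * ennreal ((g1 \<xi> + g2 \<xi>)\<^sup>2)"
      using majorant
    proof eventually_elim
      case (elim \<xi>)
      hence "(cmod (F \<psi> \<xi>))\<^sup>2 \<le> (c * (g1 \<xi> + g2 \<xi>))\<^sup>2" by (intro power_mono) auto
      thus ?case by (simp add: ennreal_mult[symmetric] power_mult_distrib)
    qed
  qed
  also have "\<dots> = ennreal (c\<^sup>2) * (\<integral>\<^sup>+\<xi>. ennreal ((g1 \<xi> + g2 \<xi>)\<^sup>2) \<partial>lborel)"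
    by (simp add: nn_integral_cmult)
  also have "\<dots> \<le> ennreal (c\<^sup>2) * ennreal ((a + b)\<^sup>2)"
    using nn_integral_square_sum_le[OF g_meas g_nonneg g1 g2 a b] by (rule mult_left_mono) simp
  also have "\<dots> = ennreal ((c * (a + b))\<^sup>2)"
    by (simp add: ennreal_mult[symmetric] power_mult_distrib)
  finally have "(L2norm \<psi>)\<^sup>2 \<le> (c * (a + b))\<^sup>2" by (simp add: ennreal_le_iff)
  thus ?thesis by (rule power2_le_imp_le) (use a b c in simp)
qed

text \<open>The error estimate at a single time t, for any admissible exponent gain h
  (the theorem uses h = min \<gamma> ((p-1)T)).\<close>
lemma error_estimate_at_time:
  fixes F :: "(real \<Rightarrow> complex) \<Rightarrow> (real \<Rightarrow> complex)"
    and T p E3 \<gamma> \<epsilon> t h :: real and \<phi> \<phi>\<epsilon> u_init u_t v_t :: "real \<Rightarrow> complex"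
  assumes F: "is_L2_fourier F" and pT: "p * T > 0" and t: "0 \<le> t" "t \<le> T"
    and h: "0 \<le> h" "h \<le> \<gamma>" "h \<le> (p - 1) * T" and E3: "E3 \<ge> 0" and \<epsilon>: "\<epsilon> > 0"
    and \<phi>: "sq_int \<phi>" and \<phi>\<epsilon>: "sq_int \<phi>\<epsilon>"
    and data: "L2norm (\<lambda>x. \<phi> x - \<phi>\<epsilon> x) \<le> \<epsilon>"
    and u_init: "sq_int u_init" "AE \<xi> in lborel. F u_init \<xi> = exp (T * \<xi>\<^sup>2) * F \<phi> \<xi>"
    and u_t: "sq_int u_t" "AE \<xi> in lborel. F u_t \<xi> = exp ((T - t) * \<xi>\<^sup>2) * F \<phi> \<xi>"
    and bound: "(\<integral>\<^sup>+ \<xi>. ennreal (exp (2 * \<gamma> * \<xi>\<^sup>2) * (cmod (F u_init \<xi>))\<^sup>2) \<partial>lborel)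
                  \<le> ennreal (E3\<^sup>2)"
    and v_t: "sq_int v_t" "AE \<xi> in lborel. F v_t \<xi> =
                 complex_of_real (exp ((T - t) * \<xi>\<^sup>2) / (1 + \<epsilon> * exp (p * T * \<xi>\<^sup>2))) * F \<phi>\<epsilon> \<xi>"
  shows "L2norm (\<lambda>x. u_t x - v_t x) \<le> \<epsilon> powr ((t + h) / (p * T)) * (E3 + 1)"
proof -
  define W where "W = (\<lambda>x. \<phi> x - \<phi>\<epsilon> x)"
  define g1 where "g1 = (\<lambda>\<xi>. exp (\<gamma> * \<xi>\<^sup>2) * cmod (F u_init \<xi>))"
  define g2 where "g2 = (\<lambda>\<xi>. cmod (F W \<xi>) / \<epsilon>)"
  have W: "sq_int W" unfolding W_def using \<phi> \<phi>\<epsilon> by (rule sq_int_diff)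
  have [measurable]: "F u_init \<in> borel_measurable lborel" "F W \<in> borel_measurable lborel"
    using F u_init(1) W unfolding is_L2_fourier_def sq_int_def by blast+
  have g1_L2: "(\<integral>\<^sup>+\<xi>. ennreal ((g1 \<xi>)\<^sup>2) \<partial>lborel) \<le> ennreal (E3\<^sup>2)"
  proof -
    have "(g1 \<xi>)\<^sup>2 = exp (2 * \<gamma> * \<xi>\<^sup>2) * (cmod (F u_init \<xi>))\<^sup>2" for \<xi>
      by (simp add: g1_def power_mult_distrib mult.assoc flip: exp_of_nat_mult)
    thus ?thesis using bound by simp
  qed
  have "(\<integral>\<^sup>+\<xi>. ennreal ((g2 \<xi>)\<^sup>2) \<partial>lborel)
      = (\<integral>\<^sup>+\<xi>. ennreal (1 / \<epsilon>\<^sup>2) * ennreal ((cmod (F W \<xi>))\<^sup>2) \<partial>lborel)"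
    using \<epsilon> by (simp add: g2_def power_divide ennreal_mult[symmetric])
  also have "\<dots> = ennreal (1 / \<epsilon>\<^sup>2) * (\<integral>\<^sup>+\<xi>. ennreal ((cmod (F W \<xi>))\<^sup>2) \<partial>lborel)"
    by (simp add: nn_integral_cmult)
  also have "\<dots> = ennreal ((L2norm W / \<epsilon>)\<^sup>2)"
    using \<epsilon> by (simp add: L2_fourier_plancherel[OF F W] ennreal_mult[symmetric] power_divide)
  also have "\<dots> \<le> ennreal (1\<^sup>2)"
  proof (intro ennreal_leI power_mono)
    show "L2norm W / \<epsilon> \<le> 1" using data \<epsilon> by (simp add: W_def)
    show "0 \<le> L2norm W / \<epsilon>" using \<epsilon> by (simp add: L2norm_def)
  qed
  finally have g2_L2: "(\<integral>\<^sup>+\<xi>. ennreal ((g2 \<xi>)\<^sup>2) \<partial>lborel) \<le> ennreal (1\<^sup>2)" .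
  have "AE \<xi> in lborel. cmod (F (\<lambda>x. u_t x - v_t x) \<xi>)
      \<le> \<epsilon> powr ((t + h) / (p * T)) * (g1 \<xi> + g2 \<xi>)"
    using L2_fourier_diff[OF F u_t(1) v_t(1)] L2_fourier_diff[OF F \<phi> \<phi>\<epsilon>] u_init(2) u_t(2) v_t(2)
  proof eventually_elim
    case (elim \<xi>)
    have "cmod (F (\<lambda>x. u_t x - v_t x) \<xi>) = cmod (exp ((T - t) * \<xi>\<^sup>2) * F \<phi> \<xi>
        - complex_of_real (exp ((T - t) * \<xi>\<^sup>2) / (1 + \<epsilon> * exp (p * T * \<xi>\<^sup>2))) * F \<phi>\<epsilon> \<xi>)"
      using elim by simp
    also have "\<dots> \<le> \<epsilon> powr ((t + h) / (p * T))
        * (exp (\<gamma> * \<xi>\<^sup>2) * cmod (exp (T * \<xi>\<^sup>2) * F \<phi> \<xi>) + cmod (F \<phi> \<xi> - F \<phi>\<epsilon> \<xi>) / \<epsilon>)"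
      by (rule frequency_error_le) (use \<epsilon> pT t h in \<open>auto simp: left_diff_distrib\<close>)
    also have "\<dots> = \<epsilon> powr ((t + h) / (p * T)) * (g1 \<xi> + g2 \<xi>)"
      using elim by (simp add: g1_def g2_def W_def)
    finally show ?case .
  qed
  moreover have "g1 \<in> borel_measurable lborel" "g2 \<in> borel_measurable lborel"
    unfolding g1_def g2_def by measurable
  moreover have "g1 \<xi> \<ge> 0" "g2 \<xi> \<ge> 0" for \<xi> unfolding g1_def g2_def using \<epsilon> by auto
  ultimately show ?thesis
    using L2norm_le_by_fourier_majorant[OF F sq_int_diff[OF u_t(1) v_t(1)] _ _ _ _ g1_L2 g2_L2] E3
    by simp
qed

theorem theorem4:
  fixes F :: "(real \<Rightarrow> complex) \<Rightarrow> (real \<Rightarrow> complex)"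
    and T p E3 \<gamma> \<epsilon> :: real
    and \<phi> \<phi>\<epsilon> :: "real \<Rightarrow> complex"
    and u v :: "real \<Rightarrow> real \<Rightarrow> complex"
  assumes F: "is_L2_fourier F"
    and T: "T > 0" and p: "p > 1" and E3: "E3 \<ge> 0"
    and \<gamma>: "0 < \<gamma>" "\<gamma> < p * T"
    and \<epsilon>: "0 < \<epsilon>" "\<epsilon> < 1"
    and \<phi>: "sq_int \<phi>" and \<phi>\<epsilon>: "sq_int \<phi>\<epsilon>"
    and data: "L2norm (\<lambda>x. \<phi> x - \<phi>\<epsilon> x) \<le> \<epsilon>"
    and u: "\<forall>t\<in>{0..T}. sq_int (\<lambda>x. u x t) \<and>
              (AE \<xi> in lborel. F (\<lambda>x. u x t) \<xi> = exp ((T - t) * \<xi>\<^sup>2) * F \<phi> \<xi>)"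
    and bound: "(\<integral>\<^sup>+ \<xi>. ennreal (exp (2 * \<gamma> * \<xi>\<^sup>2) * (cmod (F (\<lambda>x. u x 0) \<xi>))\<^sup>2) \<partial>lborel)
                  \<le> ennreal (E3\<^sup>2)"
    and v: "\<forall>t\<in>{0..T}. sq_int (\<lambda>x. v x t) \<and>
              (AE \<xi> in lborel. F (\<lambda>x. v x t) \<xi> =
                 complex_of_real (exp ((T - t) * \<xi>\<^sup>2) / (1 + \<epsilon> * exp (p * T * \<xi>\<^sup>2))) * F \<phi>\<epsilon> \<xi>)"
  shows "(\<forall>t\<in>{0..T}. L2norm (\<lambda>x. u x t - v x t)
            \<le> \<epsilon> powr ((t + min \<gamma> ((p - 1) * T)) / (p * T)) * (E3 + 1))
       \<and> L2norm (\<lambda>x. u x 0 - v x 0) \<le> \<epsilon> powr (min \<gamma> ((p - 1) * T) / (p * T)) * (E3 + 1)"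
proof -
  define h where "h = min \<gamma> ((p - 1) * T)"
  have pT: "p * T > 0" using p T by simp
  have h: "0 \<le> h" "h \<le> \<gamma>" "h \<le> (p - 1) * T" unfolding h_def using \<gamma> p T by auto
  have T0: "0 \<in> {0..T}" using T by simp
  have at_time: "L2norm (\<lambda>x. u x t - v x t) \<le> \<epsilon> powr ((t + h) / (p * T)) * (E3 + 1)"
    if t: "t \<in> {0..T}" for t
  proof (rule error_estimate_at_time[where u_init = "\<lambda>x. u x 0" and u_t = "\<lambda>x. u x t"
        and v_t = "\<lambda>x. v x t", OF F pT _ _ h E3 \<epsilon>(1) \<phi> \<phi>\<epsilon> data _ _ _ _ bound])
    show "sq_int (\<lambda>x. u x 0)"
      and "AE \<xi> in lborel. F (\<lambda>x. u x 0) \<xi> = exp (T * \<xi>\<^sup>2) * F \<phi> \<xi>"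
      using bspec[OF u T0] by simp_all
    show "sq_int (\<lambda>x. u x t)"
      and "AE \<xi> in lborel. F (\<lambda>x. u x t) \<xi> = exp ((T - t) * \<xi>\<^sup>2) * F \<phi> \<xi>"
      and "sq_int (\<lambda>x. v x t)"
      and "AE \<xi> in lborel. F (\<lambda>x. v x t) \<xi> = complex_of_real (exp ((T - t) * \<xi>\<^sup>2)
              / (1 + \<epsilon> * exp (p * T * \<xi>\<^sup>2))) * F \<phi>\<epsilon> \<xi>"
      using bspec[OF u t] bspec[OF v t] by simp_all
  qed (use t in simp_all)
  show ?thesis using at_time[OF T0] at_time unfolding h_def by simp
qed

end
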